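(* Let $\mathcal{C}=\mathrm{CSS}(C_X,C_Z)$ be an $[[n,k,d]]_2$ CSS code with $C_X=\ker H_X$, $C_Z=\ker H_Z$, of positive dimension $k>0$, which exhibits $(c_1,c_2,\epsilon_0)$-clustering for some constants $c_1,c_2,\epsilon_0>0$. Let $$\epsilon<\frac{1}{1000}\cdot\min\left\{\frac{\epsilon_0}{2},\ \frac{c_2}{4c_1},\ \frac{d}{2c_1 n}\right\},$$ and let $\rho$ be any (possibly mixed) $n$-qubit state with $\mathrm{Tr}(\mathbf{H}\rho)\le\epsilon$, where $\mathbf{H}$ is the code Hamiltonian of $\mathcal{C}$. Then at least one of the distributions $D_X^\rho$, $D_Z^\rho$ is $(\mu,\delta)$-spread with $\mu=0.02$ and $\delta=c_2$.
   Context: All vectors are over $\mathbb{F}_2$. For $y\in\mathbb{F}_2^n$, $|y|$ is the Hamming weight; for a linear code $C$, $|y|_C=\min_{y'\in C}|y+y'|$; for sets $S,T$, $\mathrm{dis}(S,T)=\min_{s\in S,t\in T}|s-t|$. A CSS code $\mathcal{C}=\mathrm{CSS}(C_X,C_Z)$ is given by parity-check matrices $H_X\in\mathbb{F}_2^{m_X\times n}$, $H_Z\in\mathbb{F}_2^{m_Z\times n}$ with $C_X=\ker H_X$, $C_Z=\ker H_Z$, $C_X^\perp\subseteq C_Z$; the code space is $\mathrm{span}\{|y+C_X^\perp\rangle : y\in C_Z\}$ where $|S\rangle$ is the uniform superposition over $S$; dimension $k=\dim C_Z-\dim C_X^\perp$, distance $d=\min\{|y|: y\in (C_Z\setminus C_X^\perp)\cup(C_X\setminus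 C_Z^\perp)\}$. Code Hamiltonian: $\mathbf{H}=\frac12(\mathbf{H}_X+\mathbf{H}_Z)$ with $\mathbf{H}_X=\frac{1}{m_X}\sum_{y\in\mathrm{rows}(H_X)}\frac{I-X^y}{2}$, $\mathbf{H}_Z=\frac{1}{m_Z}\sum_{y\in\mathrm{rows}(H_Z)}\frac{I-Z^y}{2}$ ($X^y,Z^y$ are tensor products of Pauli operators on the support of $y$). Let $G_X^\epsilon=\{y\in\mathbb{F}_2^n:|H_Xy|\le\epsilon m_X\}$ and $G_Z^\epsilon=\{y\in\mathbb{F}_2^n:|H_Zy|\le\epsilon m_Z\}$. $\mathcal{C}$ exhibits $(c_1,c_2,\epsilon_0)$-clustering if for all $0<\epsilon<\epsilon_0$: every $y\in G_X^\epsilon$ has $|y|_{C_Z^\perp}\le c_1\epsilon n$ or $|y|_{C_Z^\perp}\ge c_2 n$, and every $y\in G_Z^\epsilon$ has $|y|_{C_X^\perp}\le c_1\epsilon n$ or $|y|_{C_X^\perp}\ge c_2 n$. For an $n$-qubit state $\rho$, $D_X^\rho$ and $D_Z^\rho$ denote the distributions on $\mathbb{F}_2^n$ obtained by measuring all qubits of $\rho$ in the $X$, resp. $Z$, basis. A distribution $D$ on $\mathbb{F}_2^n$ is $(\mu,\delta)$-spread if there are $S_0,S_1\subseteq\mathbb{F}_2^n$ with $D(S_0)\ge\mu$, $D(S_1)\ge\mu$ and $\mathrm{dis}(S_0,S_1)\ge\delta n$. *)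

theory Defs
  imports Complex_Main
begin

text \<open>A vector of F_2^n is a function nat => bool vanishing outside {0..<n}.\<close>

definition F2vec :: "nat \<Rightarrow> (nat \<Rightarrow> bool) set" where
  "F2vec n = {y. \<forall>i. n \<le> i \<longrightarrow> \<not> y i}"

definition vadd :: "(nat \<Rightarrow> bool) \<Rightarrow> (nat \<Rightarrow> bool) \<Rightarrow> (nat \<Rightarrow> bool)" where
  "vadd x y = (\<lambda>i. x i \<noteq> y i)"

definition hw :: "nat \<Rightarrow> (nat \<Rightarrow> bool) \<Rightarrow> nat" where
  "hw n y = card {i. i < n \<and> y i}"

text \<open>Standard inner product over F_2 (True = 1).\<close>
definition dot :: "nat \<Rightarrow> (nat \<Rightarrow> bool) \<Rightarrow> (nat \<Rightarrow> bool) \<Rightarrow> bool" where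
  "dot n x y = odd (card {i. i < n \<and> x i \<and> y i})"

definition perp :: "nat \<Rightarrow> (nat \<Rightarrow> bool) set \<Rightarrow> (nat \<Rightarrow> bool) set" where
  "perp n C = {y \<in> F2vec n. \<forall>c\<in>C. \<not> dot n y c}"

text \<open>A parity-check matrix is given by the list of its rows.\<close>
definition kerH :: "nat \<Rightarrow> (nat \<Rightarrow> bool) list \<Rightarrow> (nat \<Rightarrow> bool) set" where
  "kerH n H = {y \<in> F2vec n. \<forall>r\<in>set H. \<not> dot n r y}"

definition synd_wt :: "nat \<Rightarrow> (nat \<Rightarrow> bool) list \<Rightarrow> (nat \<Rightarrow> bool) \<Rightarrow> nat" where
  "synd_wt n H y = length (filter (\<lambda>r. dot n r y) H)"

definition coset_wt :: "nat \<Rightarrow> (nat \<Rightarrow> bool) set \<Rightarrow> (nat \<Rightarrow> bool) \<Rightarrow> nat" where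
  "coset_wt n C y = Min ((\<lambda>y'. hw n (vadd y y')) ` C)"

text \<open>Dimension over F_2 of a linear code C: |C| = 2^dim C.\<close>
definition f2dim :: "(nat \<Rightarrow> bool) set \<Rightarrow> real" where
  "f2dim C = log 2 (real (card C))"

definition css_k :: "nat \<Rightarrow> (nat \<Rightarrow> bool) list \<Rightarrow> (nat \<Rightarrow> bool) list \<Rightarrow> real" where
  "css_k n HX HZ = f2dim (kerH n HZ) - f2dim (perp n (kerH n HX))"

definition css_d :: "nat \<Rightarrow> (nat \<Rightarrow> bool) list \<Rightarrow> (nat \<Rightarrow> bool) list \<Rightarrow> nat" where
  "css_d n HX HZ = Min (hw n ` ((kerH n HZ - perp n (kerH n HX)) \<union> (kerH n HX - perp n (kerH n HZ))))"

definition G_eps :: "nat \<Rightarrow> (nat \<Rightarrow> bool) list \<Rightarrow> real \<Rightarrow> (nat \<Rightarrow> bool) set" where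
  "G_eps n H \<epsilon> = {y \<in> F2vec n. real (synd_wt n H y) \<le> \<epsilon> * real (length H)}"

definition clustering :: "nat \<Rightarrow> (nat \<Rightarrow> bool) list \<Rightarrow> (nat \<Rightarrow> bool) list \<Rightarrow> real \<Rightarrow> real \<Rightarrow> real \<Rightarrow> bool" where
  "clustering n HX HZ c1 c2 \<epsilon>0 \<longleftrightarrow>
     (\<forall>\<epsilon>. 0 < \<epsilon> \<and> \<epsilon> < \<epsilon>0 \<longrightarrow>
        (\<forall>y\<in>G_eps n HX \<epsilon>. real (coset_wt n (perp n (kerH n HZ)) y) \<le> c1 * \<epsilon> * real n
                          \<or> real (coset_wt n (perp n (kerH n HZ)) y) \<ge> c2 * real n) \<and>
        (\<forall>y\<in>G_eps n HZ \<epsilon>. real (coset_wt n (perp n (kerH n HX)) y) \<le> c1 * \<epsilon> * real n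
                          \<or> real (coset_wt n (perp n (kerH n HX)) y) \<ge> c2 * real n))"

text \<open>Operators on (C^2)^{\<otimes> n} as matrices indexed by the computational basis F2vec n.\<close>
type_synonym qop = "(nat \<Rightarrow> bool) \<Rightarrow> (nat \<Rightarrow> bool) \<Rightarrow> complex"

definition mmul :: "nat \<Rightarrow> qop \<Rightarrow> qop \<Rightarrow> qop" where
  "mmul n A B = (\<lambda>x z. \<Sum>y\<in>F2vec n. A x y * B y z)"

definition mtrace :: "nat \<Rightarrow> qop \<Rightarrow> complex" where
  "mtrace n A = (\<Sum>x\<in>F2vec n. A x x)"

definition idop :: qop where
  "idop = (\<lambda>x z. if x = z then 1 else 0)"

definition Xop :: "(nat \<Rightarrow> bool) \<Rightarrow> qop" where
  "Xop y = (\<lambda>x z. if x = vadd z y then 1 else 0)"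

definition Zop :: "nat \<Rightarrow> (nat \<Rightarrow> bool) \<Rightarrow> qop" where
  "Zop n y = (\<lambda>x z. if x = z then (if dot n y z then -1 else 1) else 0)"

definition ham_X :: "(nat \<Rightarrow> bool) list \<Rightarrow> qop" where
  "ham_X HX = (\<lambda>x z. (1 / of_nat (length HX)) * (\<Sum>y\<leftarrow>HX. (idop x z - Xop y x z) / 2))"

definition ham_Z :: "nat \<Rightarrow> (nat \<Rightarrow> bool) list \<Rightarrow> qop" where
  "ham_Z n HZ = (\<lambda>x z. (1 / of_nat (length HZ)) * (\<Sum>y\<leftarrow>HZ. (idop x z - Zop n y x z) / 2))"

definition code_ham :: "nat \<Rightarrow> (nat \<Rightarrow> bool) list \<Rightarrow> (nat \<Rightarrow> bool) list \<Rightarrow> qop" where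
  "code_ham n HX HZ = (\<lambda>x z. (ham_X HX x z + ham_Z n HZ x z) / 2)"

definition density :: "nat \<Rightarrow> qop \<Rightarrow> bool" where
  "density n \<rho> \<longleftrightarrow>
     (\<forall>x\<in>F2vec n. \<forall>z\<in>F2vec n. \<rho> x z = cnj (\<rho> z x)) \<and>
     (\<forall>v :: (nat \<Rightarrow> bool) \<Rightarrow> complex.
        0 \<le> Re (\<Sum>x\<in>F2vec n. \<Sum>z\<in>F2vec n. cnj (v x) * \<rho> x z * v z)) \<and>
     mtrace n \<rho> = 1"

definition born :: "nat \<Rightarrow> qop \<Rightarrow> ((nat \<Rightarrow> bool) \<Rightarrow> complex) \<Rightarrow> real" where
  "born n \<rho> v = Re (\<Sum>x\<in>F2vec n. \<Sum>z\<in>F2vec n. cnj (v x) * \<rho> x z * v z)"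

definition comp_vec :: "(nat \<Rightarrow> bool) \<Rightarrow> (nat \<Rightarrow> bool) \<Rightarrow> complex" where
  "comp_vec x = (\<lambda>z. if z = x then 1 else 0)"

definition had_vec :: "nat \<Rightarrow> (nat \<Rightarrow> bool) \<Rightarrow> (nat \<Rightarrow> bool) \<Rightarrow> complex" where
  "had_vec n x = (\<lambda>z. (if dot n x z then -1 else 1) / of_real (sqrt (2 ^ n)))"

definition D_Z :: "nat \<Rightarrow> qop \<Rightarrow> (nat \<Rightarrow> bool) \<Rightarrow> real" where
  "D_Z n \<rho> x = born n \<rho> (comp_vec x)"

definition D_X :: "nat \<Rightarrow> qop \<Rightarrow> (nat \<Rightarrow> bool) \<Rightarrow> real" where
  "D_X n \<rho> x = born n \<rho> (had_vec n x)"

text \<open>(mu,delta)-spread distribution D on F_2^n; D(S) = sum over S.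
  dis(S0,S1) >= delta n is written pointwise (both sets are nonempty since D(S_i) >= mu > 0).\<close>
definition spread :: "nat \<Rightarrow> ((nat \<Rightarrow> bool) \<Rightarrow> real) \<Rightarrow> real \<Rightarrow> real \<Rightarrow> bool" where
  "spread n D \<mu> \<delta> \<longleftrightarrow>
     (\<exists>S0 S1. S0 \<subseteq> F2vec n \<and> S1 \<subseteq> F2vec n \<and>
        sum D S0 \<ge> \<mu> \<and> sum D S1 \<ge> \<mu> \<and> S0 \<noteq> {} \<and> S1 \<noteq> {} \<and>
        (\<forall>s\<in>S0. \<forall>t\<in>S1. real (hw n (vadd s t)) \<ge> \<delta> * real n))"

end

theory Submission
  imports Defs
begin

text \<open>Suppose neither distribution is spread. Low energy puts all but \<open>0.004\<close> of the mass of \<open>D\<^sub>X\<close>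
  and of \<open>D\<^sub>Z\<close> on strings of small syndrome (Markov), and clustering at twice the syndrome scale
  partitions these strings into clusters at mutual distance \<open>\<ge> c\<^sub>2n\<close>, so each distribution has a single
  cluster of mass \<open>> 0.956\<close>. Differences inside the \<open>Z\<close>-cluster \<open>A\<close> are never nontrivial logical
  operators, so, for an \<open>X\<close>-logical operator \<open>v\<close>, the Hadamard-basis weights of \<open>\<rho>\<close> restricted to \<open>A\<close>
  summed over the \<open>X\<close>-cluster \<open>B\<close> do not change when \<open>B\<close> is translated by \<open>v\<close>; the part of \<open>\<rho>\<close>
  outside \<open>A\<close> has weight \<open>< 0.044\<close>. Hence \<open>B + v\<close> keeps \<open>D\<^sub>X\<close>-mass \<open>\<ge> 0.02\<close>, while it lies at
  distance \<open>\<ge> c\<^sub>2n\<close> from \<open>B\<close>: \<open>D\<^sub>X\<close> is spread after all.\<close>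

section \<open>Vectors over \<open>F\<^sub>2\<close> and characters\<close>

definition vzero :: "nat \<Rightarrow> bool" where
  "vzero = (\<lambda>_. False)"

lemma vzero_F2vec [simp]: "vzero \<in> F2vec n"
  by (simp add: F2vec_def vzero_def)

lemma vadd_F2vec [simp]: "x \<in> F2vec n \<Longrightarrow> y \<in> F2vec n \<Longrightarrow> vadd x y \<in> F2vec n"
  by (auto simp: F2vec_def vadd_def)

lemma vadd_commute: "vadd x y = vadd y x"
  by (auto simp: vadd_def)

lemma vadd_vzero [simp]: "vadd x vzero = x" "vadd vzero x = x"
  by (auto simp: vadd_def vzero_def)

lemma vadd_self [simp]: "vadd x x = vzero"
  by (auto simp: vadd_def vzero_def)

lemma vadd_cancel [simp]: "vadd (vadd x y) y = x" "vadd y (vadd y x) = x"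
  by (auto simp: vadd_def)

lemma vadd_vadd_swap: "vadd (vadd a b) (vadd c d) = vadd (vadd a c) (vadd b d)"
  by (auto simp: vadd_def fun_eq_iff)

lemma inj_on_vadd: "inj_on (\<lambda>x. vadd x v) B"
  by (rule inj_onI) (metis vadd_cancel(1))

lemma F2vec_eq_image_Pow: "F2vec n = (\<lambda>S i. i \<in> S) ` Pow {..<n}"
proof (rule set_eqI, rule iffI)
  fix y assume "y \<in> F2vec n"
  then have "y = (\<lambda>i. i \<in> {i. y i})" "{i. y i} \<in> Pow {..<n}"
    by (auto simp: F2vec_def) (meson not_le)
  then show "y \<in> (\<lambda>S i. i \<in> S) ` Pow {..<n}" by blast
qed (auto simp: F2vec_def)

lemma finite_F2vec [simp]: "finite (F2vec n)"
  by (simp add: F2vec_eq_image_Pow)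

lemma card_F2vec: "card (F2vec n) = 2 ^ n"
proof -
  have "inj_on (\<lambda>S i. i \<in> S) (Pow {..<n})"
    by (rule inj_onI) (auto simp: fun_eq_iff)
  then show ?thesis by (simp add: F2vec_eq_image_Pow card_image card_Pow)
qed

lemma dot_commute: "dot n x y = dot n y x"
  unfolding dot_def by (simp add: conj_commute)

lemma odd_card_symdiff:
  assumes "finite A" "finite B"
  shows "odd (card ((A - B) \<union> (B - A))) \<longleftrightarrow> odd (card A) \<noteq> odd (card B)"
proof -
  have "card ((A - B) \<union> (B - A)) = card (A - B) + card (B - A)"
    by (rule card_Un_disjoint) (use assms in auto)
  moreover have "card A = card (A - B) + card (A \<inter> B)" "card B = card (B - A) + card (A \<inter> B)"
    using card_Int_Diff[OF assms(1), of B] card_Int_Diff[OF assms(2), of A] by (simp_all add: Int_commute)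
  ultimately show ?thesis by auto
qed

lemma dot_vadd_left: "dot n (vadd a b) c \<longleftrightarrow> dot n a c \<noteq> dot n b c"
proof -
  let ?A = "{i. i < n \<and> a i \<and> c i}" and ?B = "{i. i < n \<and> b i \<and> c i}"
  have "{i. i < n \<and> vadd a b i \<and> c i} = (?A - ?B) \<union> (?B - ?A)"
    by (auto simp: vadd_def)
  then show ?thesis
    unfolding dot_def using odd_card_symdiff[of ?A ?B] by simp
qed

lemma dot_vadd_right: "dot n c (vadd a b) \<longleftrightarrow> dot n c a \<noteq> dot n c b"
  using dot_vadd_left dot_commute by metis

lemma dot_vzero [simp]: "\<not> dot n vzero c" "\<not> dot n c vzero"
  by (auto simp: dot_def vzero_def)

lemma hw_vzero [simp]: "hw n vzero = 0"
  by (simp add: hw_def vzero_def)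

lemma hw_le: "hw n y \<le> n"
  unfolding hw_def using card_mono[of "{..<n}" "{i. i < n \<and> y i}"] by auto

lemma hw_vadd_le: "hw n (vadd a b) \<le> hw n a + hw n b"
proof -
  have "{i. i < n \<and> vadd a b i} \<subseteq> {i. i < n \<and> a i} \<union> {i. i < n \<and> b i}"
    by (auto simp: vadd_def)
  then have "hw n (vadd a b) \<le> card ({i. i < n \<and> a i} \<union> {i. i < n \<and> b i})"
    unfolding hw_def by (rule card_mono[rotated]) auto
  also have "\<dots> \<le> hw n a + hw n b"
    unfolding hw_def by (rule card_Un_le)
  finally show ?thesis .
qed

lemma hw_pos:
  assumes "y \<in> F2vec n" "y \<noteq> vzero"
  shows "0 < hw n y"
proof -
  obtain i where "y i" using assms(2) by (auto simp: vzero_def)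
  moreover from assms(1) have "y i \<Longrightarrow> i < n" unfolding F2vec_def by (metis mem_Collect_eq not_le)
  ultimately have "{i. i < n \<and> y i} \<noteq> {}" by blast
  then show ?thesis by (simp add: hw_def card_gt_0_iff)
qed

definition sign_of :: "bool \<Rightarrow> complex" where
  "sign_of b = (if b then -1 else 1)"

lemma sign_of_mult: "sign_of a * sign_of b = sign_of (a \<noteq> b)"
  by (auto simp: sign_of_def)

lemma cnj_sign_of [simp]: "cnj (sign_of a) = sign_of a"
  by (auto simp: sign_of_def)

lemma sum_eq_0_by_involution:
  fixes f :: "'a \<Rightarrow> 'b :: real_vector"
  assumes "\<And>x. x \<in> B \<Longrightarrow> g x \<in> B" "\<And>x. x \<in> B \<Longrightarrow> g (g x) = x"
    and "\<And>x. x \<in> B \<Longrightarrow> f (g x) = - f x"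
  shows "sum f B = 0"
proof -
  have "bij_betw g B B"
    by (rule bij_betw_byWitness[where f'=g]) (use assms in auto)
  then have "(\<Sum>x\<in>B. f (g x)) = sum f B" by (rule sum.reindex_bij_betw)
  moreover have "(\<Sum>x\<in>B. f (g x)) = - sum f B"
    using assms(3) by (simp add: sum_negf)
  ultimately have "sum f B + sum f B = 0" by (metis add.right_inverse)
  then have "(2::real) *\<^sub>R sum f B = 0" by (simp add: scaleR_2)
  then show ?thesis by simp
qed

lemma sum_character_eq_0:
  assumes "\<And>x. x \<in> B \<Longrightarrow> vadd x r \<in> B" and "dot n r w"
  shows "(\<Sum>x\<in>B. sign_of (dot n x w)) = 0"
  by (rule sum_eq_0_by_involution[where g="\<lambda>x. vadd x r"])
     (use assms in \<open>auto simp: dot_vadd_left sign_of_def\<close>)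

lemma sum_character_F2vec:
  assumes "w \<in> F2vec n"
  shows "(\<Sum>x\<in>F2vec n. sign_of (dot n x w)) = (if w = vzero then 2 ^ n else 0)"
proof (cases "w = vzero")
  case True
  then show ?thesis by (simp add: sign_of_def card_F2vec)
next
  case False
  then obtain i where "w i" by (auto simp: vzero_def)
  with assms have "i < n" unfolding F2vec_def by (metis mem_Collect_eq not_le)
  define r where "r = (\<lambda>j. j = i)"
  have "r \<in> F2vec n" using \<open>i < n\<close> by (auto simp: r_def F2vec_def)
  moreover have "{j. j < n \<and> r j \<and> w j} = {i}" using \<open>i < n\<close> \<open>w i\<close> by (auto simp: r_def)
  then have "dot n r w" by (simp add: dot_def)
  ultimately show ?thesis
    using False sum_character_eq_0[of "F2vec n" r n w] by simp
qed

section \<open>Density operators and measurement in the two bases\<close>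

lemma had_vec_eq: "had_vec n x z = sign_of (dot n x z) / complex_of_real (sqrt (2 ^ n))"
  by (simp add: had_vec_def sign_of_def)

lemma cnj_had_vec [simp]: "cnj (had_vec n x z) = had_vec n x z"
  by (simp add: had_vec_eq)

lemma had_vec_mult: "had_vec n x z * had_vec n x z' = sign_of (dot n x (vadd z z')) / 2 ^ n"
proof -
  have "(complex_of_real (sqrt (2 ^ n)))\<^sup>2 = 2 ^ n"
    by (metis of_real_numeral of_real_power power2_eq_square real_sqrt_pow2 zero_le_numeral zero_le_power)
  then show ?thesis
    by (simp add: had_vec_eq power2_eq_square sign_of_mult dot_vadd_right)
qed

definition dform :: "nat \<Rightarrow> qop \<Rightarrow> ((nat \<Rightarrow> bool) \<Rightarrow> complex) \<Rightarrow> ((nat \<Rightarrow> bool) \<Rightarrow> complex) \<Rightarrow> complex" where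
  "dform n \<rho> a b = (\<Sum>z\<in>F2vec n. \<Sum>z'\<in>F2vec n. cnj (a z) * \<rho> z z' * b z')"

lemma dform_add_left: "dform n \<rho> (\<lambda>z. a z + b z) c = dform n \<rho> a c + dform n \<rho> b c"
  by (simp add: dform_def algebra_simps sum.distrib)

lemma dform_add_right: "dform n \<rho> c (\<lambda>z. a z + b z) = dform n \<rho> c a + dform n \<rho> c b"
  by (simp add: dform_def algebra_simps sum.distrib)

lemma dform_scale_left: "dform n \<rho> (\<lambda>z. k * a z) b = cnj k * dform n \<rho> a b"
  by (simp add: dform_def algebra_simps sum_distrib_left)

lemma dform_scale_right: "dform n \<rho> a (\<lambda>z. k * b z) = k * dform n \<rho> a b"
  by (simp add: dform_def algebra_simps sum_distrib_left)

lemma density_dform_nonneg: "density n \<rho> \<Longrightarrow> 0 \<le> Re (dform n \<rho> a a)"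
  unfolding density_def dform_def by blast

lemma density_mtrace: "density n \<rho> \<Longrightarrow> mtrace n \<rho> = 1"
  unfolding density_def by blast

lemma density_trace: "density n \<rho> \<Longrightarrow> (\<Sum>z\<in>F2vec n. \<rho> z z) = 1"
  using density_mtrace unfolding mtrace_def .

lemma density_dform_swap:
  assumes "density n \<rho>"
  shows "dform n \<rho> b a = cnj (dform n \<rho> a b)"
proof -
  have herm: "cnj (\<rho> z z') = \<rho> z' z" if "z \<in> F2vec n" "z' \<in> F2vec n" for z z'
    using assms that unfolding density_def by (metis complex_cnj_cnj)
  have "cnj (dform n \<rho> a b) = (\<Sum>z\<in>F2vec n. \<Sum>z'\<in>F2vec n. a z * cnj (\<rho> z z') * cnj (b z'))"
    by (simp add: dform_def)
  also have "\<dots> = (\<Sum>z'\<in>F2vec n. \<Sum>z\<in>F2vec n. a z * cnj (\<rho> z z') * cnj (b z'))"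
    by (rule sum.swap)
  also have "\<dots> = dform n \<rho> b a"
    unfolding dform_def by (intro sum.cong refl) (simp add: herm ac_simps)
  finally show ?thesis by simp
qed

text \<open>Positivity on \<open>p/4 \<plusminus> q\<close> gives \<open>2|Re\<langle>p|\<rho>|q\<rangle>| \<le> \<langle>p|\<rho>|p\<rangle>/4 + 4\<langle>q|\<rho>|q\<rangle>\<close>.\<close>
lemma density_dform_add_bounds:
  assumes "density n \<rho>"
  shows "Re (dform n \<rho> (\<lambda>z. p z + q z) (\<lambda>z. p z + q z))
           \<le> 5/4 * Re (dform n \<rho> p p) + 5 * Re (dform n \<rho> q q)"
    and "3/4 * Re (dform n \<rho> p p) - 3 * Re (dform n \<rho> q q)
           \<le> Re (dform n \<rho> (\<lambda>z. p z + q z) (\<lambda>z. p z + q z))"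
proof -
  define N where "N f = Re (dform n \<rho> f f)" for f
  have "Re (dform n \<rho> q p) = Re (dform n \<rho> p q)"
    using density_dform_swap[OF assms, of q p] by simp
  then have expand: "N (\<lambda>z. of_real t * p z + q z) = t * t * N p + N q + 2 * t * Re (dform n \<rho> p q)"
    for t :: real
    by (simp add: N_def dform_add_left dform_add_right dform_scale_left dform_scale_right algebra_simps)
  have "0 \<le> N (\<lambda>z. of_real t * p z + q z)" for t
    unfolding N_def by (rule density_dform_nonneg[OF assms])
  from this[of "1/4"] this[of "-1/4"] expand[of "1/4"] expand[of "-1/4"] expand[of 1]
  show "N (\<lambda>z. p z + q z) \<le> 5/4 * N p + 5 * N q" "3/4 * N p - 3 * N q \<le> N (\<lambda>z. p z + q z)"
    by simp_all
qed

definition restrict_vec :: "'a set \<Rightarrow> ('a \<Rightarrow> complex) \<Rightarrow> 'a \<Rightarrow> complex" where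
  "restrict_vec A f = (\<lambda>z. if z \<in> A then f z else 0)"

lemma restrict_vec_UNIV [simp]: "restrict_vec UNIV f = f"
  by (simp add: restrict_vec_def)

lemma restrict_vec_add_Compl: "(\<lambda>z. restrict_vec A f z + restrict_vec (- A) f z) = f"
  by (auto simp: restrict_vec_def)

lemma sum_dform_had_restrict:
  "(\<Sum>x\<in>B. w x * dform n \<rho> (restrict_vec A (had_vec n (g x))) (restrict_vec A (had_vec n (g x))))
   = (\<Sum>z\<in>F2vec n. \<Sum>z'\<in>F2vec n. if z \<in> A \<and> z' \<in> A
        then \<rho> z z' * (\<Sum>x\<in>B. w x * sign_of (dot n (g x) (vadd z z'))) else 0) / 2 ^ n"
proof -
  have "(\<Sum>x\<in>B. w x * dform n \<rho> (restrict_vec A (had_vec n (g x))) (restrict_vec A (had_vec n (g x))))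
     = (\<Sum>x\<in>B. \<Sum>z\<in>F2vec n. \<Sum>z'\<in>F2vec n. if z \<in> A \<and> z' \<in> A
          then \<rho> z z' * (w x * sign_of (dot n (g x) (vadd z z'))) / 2 ^ n else 0)"
    unfolding dform_def restrict_vec_def sum_distrib_left
    by (intro sum.cong refl) (auto simp: mult.commute mult.left_commute had_vec_mult)
  also have "\<dots> = (\<Sum>z\<in>F2vec n. \<Sum>z'\<in>F2vec n. \<Sum>x\<in>B. if z \<in> A \<and> z' \<in> A
          then \<rho> z z' * (w x * sign_of (dot n (g x) (vadd z z'))) / 2 ^ n else 0)"
    by (subst sum.swap) (intro sum.cong refl sum.swap)
  also have "\<dots> = (\<Sum>z\<in>F2vec n. \<Sum>z'\<in>F2vec n. (if z \<in> A \<and> z' \<in> A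
          then \<rho> z z' * (\<Sum>x\<in>B. w x * sign_of (dot n (g x) (vadd z z'))) else 0) / 2 ^ n)"
    by (intro sum.cong refl) (auto simp: sum_distrib_left sum_divide_distrib)
  finally show ?thesis
    by (simp add: sum_divide_distrib)
qed

lemma D_Z_eq:
  assumes "x \<in> F2vec n"
  shows "D_Z n \<rho> x = Re (\<rho> x x)"
proof -
  have "(\<Sum>z\<in>F2vec n. \<Sum>z'\<in>F2vec n. cnj (comp_vec x z) * \<rho> z z' * comp_vec x z')
      = (\<Sum>z\<in>F2vec n. if z = x then \<rho> x x else 0)"
    by (intro sum.cong refl) (simp add: comp_vec_def assms if_distrib[of "times _"] cong: if_cong)
  then show ?thesis using assms by (simp add: D_Z_def born_def)
qed

lemma D_X_eq: "D_X n \<rho> x = Re (dform n \<rho> (had_vec n x) (had_vec n x))"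
  by (simp add: D_X_def born_def dform_def)

lemma D_X_nonneg: "density n \<rho> \<Longrightarrow> 0 \<le> D_X n \<rho> x"
  by (simp add: D_X_eq density_dform_nonneg)

lemma D_Z_nonneg: "density n \<rho> \<Longrightarrow> 0 \<le> D_Z n \<rho> x"
  unfolding D_Z_def born_def using density_dform_nonneg[unfolded dform_def] by blast

text \<open>Fourier inversion over \<open>F\<^sub>2\<^sup>n\<close>.\<close>
lemma sum_character_dform_had_restrict:
  assumes "r \<in> F2vec n"
  shows "(\<Sum>x\<in>F2vec n. sign_of (dot n x r) * dform n \<rho> (restrict_vec A (had_vec n x)) (restrict_vec A (had_vec n x)))
       = (\<Sum>z\<in>F2vec n \<inter> A. if vadd z r \<in> A then \<rho> z (vadd z r) else 0)"
proof -
  have char: "(\<Sum>x\<in>F2vec n. sign_of (dot n x r) * sign_of (dot n x (vadd z z')))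
      = (if z' = vadd z r then 2 ^ n else 0)" if "z \<in> F2vec n" "z' \<in> F2vec n" for z z'
  proof -
    have "vadd (vadd z z') r = vzero \<longleftrightarrow> z' = vadd z r"
      by (auto simp: vadd_def vzero_def fun_eq_iff)
    moreover have "sign_of (dot n x r) * sign_of (dot n x (vadd z z'))
        = sign_of (dot n x (vadd (vadd z z') r))" for x
      by (auto simp: sign_of_def dot_vadd_right)
    ultimately show ?thesis
      using sum_character_F2vec[of "vadd (vadd z z') r" n] that assms by simp
  qed
  have "(\<Sum>x\<in>F2vec n. sign_of (dot n x r) * dform n \<rho> (restrict_vec A (had_vec n x)) (restrict_vec A (had_vec n x)))
      = (\<Sum>z\<in>F2vec n. \<Sum>z'\<in>F2vec n. if z' = vadd z r then (if z \<in> A \<and> z' \<in> A then \<rho> z z' else 0) else 0)"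
    unfolding sum_dform_had_restrict[where g = "\<lambda>x. x"] sum_divide_distrib
    by (intro sum.cong refl) (simp only: char, auto)
  also have "\<dots> = (\<Sum>z\<in>F2vec n. if z \<in> A \<and> vadd z r \<in> A then \<rho> z (vadd z r) else 0)"
    using assms by (intro sum.cong refl) simp
  finally show ?thesis
    by (simp add: sum.inter_restrict) (intro sum.cong refl, auto)
qed

lemma sum_dform_had_restrict_diag:
  "(\<Sum>x\<in>F2vec n. dform n \<rho> (restrict_vec A (had_vec n x)) (restrict_vec A (had_vec n x)))
   = (\<Sum>z\<in>F2vec n \<inter> A. \<rho> z z)"
  using sum_character_dform_had_restrict[of vzero n \<rho> A] by (simp add: sign_of_def)

lemma sum_D_X: "density n \<rho> \<Longrightarrow> (\<Sum>x\<in>F2vec n. D_X n \<rho> x) = 1"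
  using sum_dform_had_restrict_diag[of n \<rho> UNIV] by (simp add: D_X_eq density_trace flip: Re_sum)

lemma sum_D_Z: "density n \<rho> \<Longrightarrow> (\<Sum>x\<in>F2vec n. D_Z n \<rho> x) = 1"
  by (simp add: D_Z_eq density_trace flip: Re_sum)

lemma sum_D_X_dot:
  assumes "density n \<rho>" and "r \<in> F2vec n"
  shows "(\<Sum>x\<in>F2vec n. D_X n \<rho> x * (if dot n r x then 1 else 0))
       = (1 - Re (\<Sum>z\<in>F2vec n. \<rho> z (vadd z r))) / 2"
proof -
  have "Re (\<Sum>z\<in>F2vec n. \<rho> z (vadd z r))
      = Re (\<Sum>x\<in>F2vec n. sign_of (dot n x r) * dform n \<rho> (had_vec n x) (had_vec n x))"
    using sum_character_dform_had_restrict[OF assms(2), of \<rho> UNIV] by simp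
  also have "\<dots> = (\<Sum>x\<in>F2vec n. D_X n \<rho> x * (if dot n r x then -1 else 1))"
    unfolding Re_sum by (intro sum.cong refl) (simp add: D_X_eq sign_of_def dot_commute[of n r])
  also have "\<dots> = (\<Sum>x\<in>F2vec n. D_X n \<rho> x) - 2 * (\<Sum>x\<in>F2vec n. D_X n \<rho> x * (if dot n r x then 1 else 0))"
    by (simp add: sum_distrib_left flip: sum_subtractf) (intro sum.cong refl, simp)
  finally show ?thesis using sum_D_X[OF assms(1)] by simp
qed

text \<open>For \<open>z, z' \<in> A\<close> either \<open>z + z'\<close> is invisible to \<open>v\<close>, or some row of \<open>H\<close> detects it and the
  corresponding character sums over the \<open>H\<close>-invariant set \<open>B\<close> vanish.\<close>
lemma sum_dform_had_restrict_shift: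
  assumes B_closed: "\<And>x r. x \<in> B \<Longrightarrow> r \<in> set H \<Longrightarrow> vadd x r \<in> B"
    and A_orth: "\<And>z z'. z \<in> A \<Longrightarrow> z' \<in> A \<Longrightarrow> vadd z z' \<in> kerH n H \<Longrightarrow> \<not> dot n v (vadd z z')"
  shows "(\<Sum>x\<in>B. dform n \<rho> (restrict_vec A (had_vec n (vadd x v))) (restrict_vec A (had_vec n (vadd x v))))
       = (\<Sum>x\<in>B. dform n \<rho> (restrict_vec A (had_vec n x)) (restrict_vec A (had_vec n x)))"
proof -
  have char: "(\<Sum>x\<in>B. sign_of (dot n (vadd x v) w)) = (\<Sum>x\<in>B. sign_of (dot n x w))"
    if w: "w \<in> F2vec n" "w \<in> kerH n H \<Longrightarrow> \<not> dot n v w" for w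
  proof (cases "w \<in> kerH n H")
    case True
    then show ?thesis using w(2) by (simp add: dot_vadd_left)
  next
    case False
    then obtain r where "r \<in> set H" "dot n r w" using w(1) unfolding kerH_def by auto
    then have "(\<Sum>x\<in>B. sign_of (dot n x w)) = 0"
      using B_closed by (intro sum_character_eq_0) blast+
    moreover have "(\<Sum>x\<in>B. sign_of (dot n (vadd x v) w)) = sign_of (dot n v w) * (\<Sum>x\<in>B. sign_of (dot n x w))"
      unfolding sum_distrib_left by (intro sum.cong refl) (auto simp: sign_of_def dot_vadd_left)
    ultimately show ?thesis by simp
  qed
  show ?thesis
    using sum_dform_had_restrict[where w = "\<lambda>_. 1" and B = B and g = "\<lambda>x. vadd x v" and A = A]
      sum_dform_had_restrict[where w = "\<lambda>_. 1" and B = B and g = "\<lambda>x. x" and A = A]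
    by simp (intro sum.cong refl, auto simp: char A_orth)
qed

text \<open>Split each Hadamard vector into its parts on \<open>A\<close> and on \<open>-A\<close>: the \<open>A\<close>-parts are invariant under the
  shift by \<open>v\<close>, and the \<open>(-A)\<close>-parts carry total weight \<open>D\<^sub>Z(-A)\<close>.\<close>
lemma sum_D_X_shift_ge:
  assumes rho: "density n \<rho>" and "B \<subseteq> F2vec n" and "v \<in> F2vec n"
    and B_closed: "\<And>x r. x \<in> B \<Longrightarrow> r \<in> set H \<Longrightarrow> vadd x r \<in> B"
    and A_orth: "\<And>z z'. z \<in> A \<Longrightarrow> z' \<in> A \<Longrightarrow> vadd z z' \<in> kerH n H \<Longrightarrow> \<not> dot n v (vadd z z')"
  shows "3/5 * (\<Sum>x\<in>B. D_X n \<rho> x) - 6 * (\<Sum>z\<in>F2vec n - A. D_Z n \<rho> z) \<le> (\<Sum>x\<in>B. D_X n \<rho> (vadd x v))"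
proof -
  define P where "P y = Re (dform n \<rho> (restrict_vec A (had_vec n y)) (restrict_vec A (had_vec n y)))" for y
  define Q where "Q y = Re (dform n \<rho> (restrict_vec (- A) (had_vec n y)) (restrict_vec (- A) (had_vec n y)))" for y
  define \<eta> where "\<eta> = (\<Sum>z\<in>F2vec n - A. D_Z n \<rho> z)"
  have upper: "D_X n \<rho> y \<le> 5/4 * P y + 5 * Q y" and lower: "3/4 * P y - 3 * Q y \<le> D_X n \<rho> y" for y
    using density_dform_add_bounds[OF rho, of "restrict_vec A (had_vec n y)" "restrict_vec (- A) (had_vec n y)"]
    unfolding P_def Q_def D_X_eq restrict_vec_add_Compl by auto
  have Q_nonneg: "0 \<le> Q y" for y
    unfolding Q_def by (rule density_dform_nonneg[OF rho])
  have "(\<Sum>y\<in>F2vec n. Q y) = \<eta>"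
    using sum_dform_had_restrict_diag[of n \<rho> "- A"]
    by (simp add: Q_def \<eta>_def D_Z_eq Diff_eq Re_sum flip: Re_sum)
  moreover have "(\<Sum>x\<in>B. Q (vadd x v)) = (\<Sum>y\<in>(\<lambda>x. vadd x v) ` B. Q y)"
    by (simp add: sum.reindex[OF inj_on_vadd])
  ultimately have Q_B: "(\<Sum>x\<in>B. Q x) \<le> \<eta>" and Q_Bv: "(\<Sum>x\<in>B. Q (vadd x v)) \<le> \<eta>"
    using assms(2,3) Q_nonneg by (auto intro!: sum_mono2)
  have P_shift: "(\<Sum>x\<in>B. P (vadd x v)) = (\<Sum>x\<in>B. P x)"
    unfolding P_def using sum_dform_had_restrict_shift[OF B_closed A_orth, where \<rho> = \<rho>] by (simp flip: Re_sum)
  have "(\<Sum>x\<in>B. D_X n \<rho> x) \<le> (\<Sum>x\<in>B. 5/4 * P x + 5 * Q x)"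
    by (intro sum_mono upper)
  moreover have "(\<Sum>x\<in>B. 3/4 * P (vadd x v) - 3 * Q (vadd x v)) \<le> (\<Sum>x\<in>B. D_X n \<rho> (vadd x v))"
    by (intro sum_mono lower)
  ultimately show ?thesis
    using P_shift Q_B Q_Bv unfolding \<eta>_def[symmetric] sum.distrib sum_subtractf sum_distrib_left[symmetric]
    by linarith
qed

section \<open>The code Hamiltonian\<close>

lemma sum_sum_list_swap:
  "(\<Sum>x\<in>S. \<Sum>r\<leftarrow>H. f r x) = (\<Sum>r\<leftarrow>H. \<Sum>x\<in>S. (f r x :: 'a :: comm_monoid_add))"
  by (induction H) (simp_all add: sum.distrib)

lemma Re_sum_list: "Re (\<Sum>r\<leftarrow>H. f r) = (\<Sum>r\<leftarrow>H. Re (f r))"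
  by (induction H) simp_all

lemma synd_wt_eq_sum_list: "real (synd_wt n H x) = (\<Sum>r\<leftarrow>H. if dot n r x then 1 else 0)"
  unfolding synd_wt_def by (induction H) simp_all

lemma mtrace_mmul_add:
  "mtrace n (mmul n (\<lambda>x z. A x z + B x z) \<rho>) = mtrace n (mmul n A \<rho>) + mtrace n (mmul n B \<rho>)"
  by (simp add: mtrace_def mmul_def algebra_simps sum.distrib)

lemma mtrace_mmul_diff:
  "mtrace n (mmul n (\<lambda>x z. A x z - B x z) \<rho>) = mtrace n (mmul n A \<rho>) - mtrace n (mmul n B \<rho>)"
  by (simp add: mtrace_def mmul_def algebra_simps sum_subtractf)

lemma mtrace_mmul_scale: "mtrace n (mmul n (\<lambda>x z. c * A x z) \<rho>) = c * mtrace n (mmul n A \<rho>)"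
  by (simp add: mtrace_def mmul_def sum_distrib_left mult.assoc)

lemma mtrace_mmul_divide: "mtrace n (mmul n (\<lambda>x z. A x z / c) \<rho>) = mtrace n (mmul n A \<rho>) / c"
  by (simp add: mtrace_def mmul_def sum_divide_distrib)

lemma mtrace_mmul_sum_list:
  "mtrace n (mmul n (\<lambda>x z. \<Sum>r\<leftarrow>H. A r x z) \<rho>) = (\<Sum>r\<leftarrow>H. mtrace n (mmul n (A r) \<rho>))"
  by (simp add: mtrace_def mmul_def sum_sum_list_swap flip: sum_list_mult_const)

lemma mtrace_mmul_diag:
  "mtrace n (mmul n (\<lambda>x z. if x = z then f z else 0) \<rho>) = (\<Sum>x\<in>F2vec n. f x * \<rho> x x)"
proof -
  have "(\<Sum>z\<in>F2vec n. (if x = z then f z else 0) * \<rho> z x) = f x * \<rho> x x" if "x \<in> F2vec n" for x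
  proof -
    have "(\<Sum>z\<in>F2vec n. (if x = z then f z else 0) * \<rho> z x) = (\<Sum>z\<in>F2vec n. if x = z then f x * \<rho> x x else 0)"
      by (intro sum.cong refl) auto
    then show ?thesis using that by simp
  qed
  then show ?thesis by (simp add: mtrace_def mmul_def)
qed

lemma mtrace_mmul_idop: "mtrace n (mmul n idop \<rho>) = mtrace n \<rho>"
  using mtrace_mmul_diag[of n "\<lambda>_. 1" \<rho>] by (simp add: idop_def mtrace_def)

lemma mtrace_mmul_Xop:
  assumes "r \<in> F2vec n"
  shows "mtrace n (mmul n (Xop r) \<rho>) = (\<Sum>z\<in>F2vec n. \<rho> z (vadd z r))"
proof -
  have "mtrace n (mmul n (Xop r) \<rho>) = (\<Sum>z\<in>F2vec n. \<Sum>x\<in>F2vec n. if x = vadd z r then \<rho> z x else 0)"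
    unfolding mtrace_def mmul_def Xop_def by (subst sum.swap) (intro sum.cong refl, auto)
  also have "\<dots> = (\<Sum>z\<in>F2vec n. \<rho> z (vadd z r))"
    using assms by (intro sum.cong refl) simp
  finally show ?thesis .
qed

lemma mtrace_mmul_Zop: "mtrace n (mmul n (Zop n r) \<rho>) = (\<Sum>x\<in>F2vec n. (if dot n r x then -1 else 1) * \<rho> x x)"
  unfolding Zop_def by (rule mtrace_mmul_diag)

definition mean_synd :: "nat \<Rightarrow> (nat \<Rightarrow> bool) list \<Rightarrow> ((nat \<Rightarrow> bool) \<Rightarrow> real) \<Rightarrow> real" where
  "mean_synd n H D = (\<Sum>x\<in>F2vec n. D x * real (synd_wt n H x)) / real (length H)"

lemma mean_synd_nonneg: "(\<And>x. 0 \<le> D x) \<Longrightarrow> 0 \<le> mean_synd n H D"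
  by (simp add: mean_synd_def sum_nonneg)

lemma mean_synd_eq_sum_list:
  "mean_synd n H D = (\<Sum>r\<leftarrow>H. \<Sum>x\<in>F2vec n. D x * (if dot n r x then 1 else 0)) / real (length H)"
  by (simp add: mean_synd_def synd_wt_eq_sum_list sum_sum_list_swap flip: sum_list_const_mult)

lemma Re_mtrace_mmul_ham_X:
  assumes "set H \<subseteq> F2vec n" and rho: "density n \<rho>"
  shows "Re (mtrace n (mmul n (ham_X H) \<rho>)) = mean_synd n H (D_X n \<rho>)"
proof -
  have "Re (mtrace n (mmul n (\<lambda>x z. (idop x z - Xop r x z) / 2) \<rho>))
      = (\<Sum>x\<in>F2vec n. D_X n \<rho> x * (if dot n r x then 1 else 0))" if "r \<in> set H" for r
    using assms that density_mtrace[OF rho]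
    by (simp add: mtrace_mmul_divide mtrace_mmul_diff mtrace_mmul_idop mtrace_mmul_Xop sum_D_X_dot subset_iff)
  then show ?thesis
    unfolding ham_X_def mtrace_mmul_scale mtrace_mmul_sum_list mean_synd_eq_sum_list
    by (simp add: Re_sum_list cong: map_cong)
qed

lemma Re_mtrace_mmul_ham_Z: "Re (mtrace n (mmul n (ham_Z n H) \<rho>)) = mean_synd n H (D_Z n \<rho>)"
proof -
  have "Re (mtrace n (mmul n (\<lambda>x z. (idop x z - Zop n r x z) / 2) \<rho>))
      = (\<Sum>x\<in>F2vec n. D_Z n \<rho> x * (if dot n r x then 1 else 0))" for r
  proof -
    have "Re (mtrace n (mmul n (\<lambda>x z. (idop x z - Zop n r x z) / 2) \<rho>))
        = (\<Sum>x\<in>F2vec n. Re ((\<rho> x x - (if dot n r x then -1 else 1) * \<rho> x x) / 2))"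
      unfolding mtrace_mmul_divide mtrace_mmul_diff mtrace_mmul_idop mtrace_mmul_Zop
      by (simp add: mtrace_def Re_sum flip: sum_subtractf sum_divide_distrib)
    also have "\<dots> = (\<Sum>x\<in>F2vec n. D_Z n \<rho> x * (if dot n r x then 1 else 0))"
      by (intro sum.cong refl) (simp add: D_Z_eq)
    finally show ?thesis .
  qed
  then show ?thesis
    unfolding ham_Z_def mtrace_mmul_scale mtrace_mmul_sum_list mean_synd_eq_sum_list
    by (simp add: Re_sum_list)
qed

lemma Re_mtrace_mmul_code_ham:
  assumes "set HX \<subseteq> F2vec n" "density n \<rho>"
  shows "Re (mtrace n (mmul n (code_ham n HX HZ) \<rho>)) = (mean_synd n HX (D_X n \<rho>) + mean_synd n HZ (D_Z n \<rho>)) / 2"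
  unfolding code_ham_def mtrace_mmul_divide mtrace_mmul_add
  using Re_mtrace_mmul_ham_X[OF assms] Re_mtrace_mmul_ham_Z by simp

lemma mass_outside_G_eps_le:
  assumes D_nonneg: "\<And>x. 0 \<le> D x" and "H \<noteq> []" and "0 < e"
  shows "e * sum D (F2vec n - G_eps n H e) \<le> mean_synd n H D"
proof -
  have "e * real (length H) * sum D (F2vec n - G_eps n H e)
      = (\<Sum>x\<in>F2vec n - G_eps n H e. D x * (e * real (length H)))"
    by (simp add: sum_distrib_left ac_simps)
  also have "\<dots> \<le> (\<Sum>x\<in>F2vec n - G_eps n H e. D x * real (synd_wt n H x))"
    using D_nonneg by (intro sum_mono mult_left_mono) (auto simp: G_eps_def)
  also have "\<dots> \<le> (\<Sum>x\<in>F2vec n. D x * real (synd_wt n H x))"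
    using D_nonneg by (intro sum_mono2) auto
  finally show ?thesis
    using \<open>H \<noteq> []\<close> by (simp add: mean_synd_def pos_le_divide_eq ac_simps)
qed

section \<open>Syndromes, coset weights and clusters\<close>

lemma perp_subset: "perp n K \<subseteq> F2vec n"
  by (auto simp: perp_def)

lemma finite_perp [simp]: "finite (perp n K)"
  using finite_subset[OF perp_subset] by simp

lemma vzero_perp [simp]: "vzero \<in> perp n K"
  by (simp add: perp_def)

lemma perp_vadd: "a \<in> perp n K \<Longrightarrow> b \<in> perp n K \<Longrightarrow> vadd a b \<in> perp n K"
  by (auto simp: perp_def dot_vadd_left)

lemma kerH_subset: "kerH n H \<subseteq> F2vec n"
  by (auto simp: kerH_def)

lemma kerH_vadd: "a \<in> kerH n H \<Longrightarrow> b \<in> kerH n H \<Longrightarrow> vadd a b \<in> kerH n H"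
  by (auto simp: kerH_def dot_vadd_right)

lemma coset_wt_le: "c \<in> perp n K \<Longrightarrow> coset_wt n (perp n K) y \<le> hw n (vadd y c)"
  unfolding coset_wt_def by (rule Min_le) auto

lemma coset_wt_attained: "\<exists>c\<in>perp n K. coset_wt n (perp n K) y = hw n (vadd y c)"
proof -
  have "coset_wt n (perp n K) y \<in> (\<lambda>y'. hw n (vadd y y')) ` perp n K"
    unfolding coset_wt_def using vzero_perp[of n K] by (intro Min_in) (simp, blast)
  then show ?thesis by auto
qed

lemma coset_wt_le_hw: "coset_wt n (perp n K) y \<le> hw n y"
  using coset_wt_le[OF vzero_perp, of n K y] by simp

lemma coset_wt_eq_0: "c \<in> perp n K \<Longrightarrow> coset_wt n (perp n K) c = 0"
  using coset_wt_le[of c n K c] by simp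

lemma coset_wt_vadd_le:
  "coset_wt n (perp n K) (vadd a b) \<le> coset_wt n (perp n K) a + coset_wt n (perp n K) b"
proof -
  obtain ca cb where "ca \<in> perp n K" "coset_wt n (perp n K) a = hw n (vadd a ca)"
    and "cb \<in> perp n K" "coset_wt n (perp n K) b = hw n (vadd b cb)"
    using coset_wt_attained by metis
  moreover have "coset_wt n (perp n K) (vadd a b) \<le> hw n (vadd (vadd a b) (vadd ca cb))"
    using calculation by (intro coset_wt_le perp_vadd)
  ultimately show ?thesis
    using hw_vadd_le[of n "vadd a ca" "vadd b cb"] by (simp add: vadd_vadd_swap)
qed

lemma synd_wt_vadd_le: "synd_wt n H (vadd a b) \<le> synd_wt n H a + synd_wt n H b"
  unfolding synd_wt_def by (induction H) (auto simp: dot_vadd_right)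

lemma synd_wt_vadd_kerH: "c \<in> kerH n H \<Longrightarrow> synd_wt n H (vadd a c) = synd_wt n H a"
  unfolding synd_wt_def kerH_def by (auto simp: dot_vadd_right intro: arg_cong[where f = length] filter_cong)

lemma G_eps_subset: "G_eps n H e \<subseteq> F2vec n"
  by (auto simp: G_eps_def)

lemma G_eps_vadd: "a \<in> G_eps n H e \<Longrightarrow> b \<in> G_eps n H e \<Longrightarrow> vadd a b \<in> G_eps n H (2 * e)"
  using synd_wt_vadd_le[of n H a b] by (auto simp: G_eps_def)

lemma G_eps_vadd_kerH: "a \<in> G_eps n H e \<Longrightarrow> c \<in> kerH n H \<Longrightarrow> vadd a c \<in> G_eps n H e"
  using kerH_subset[of n H] by (auto simp: G_eps_def synd_wt_vadd_kerH)

text \<open>Take a maximal light union \<open>U\<close> of classes and add the class \<open>K\<close> of a point outside \<open>U\<close>: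
  \<open>U \<union> K\<close> is heavy, so its complement is light.\<close>
lemma exists_heavy_class:
  fixes D :: "'a \<Rightarrow> real"
  assumes "finite G" and "0 < \<mu>" and "\<mu> \<le> sum D G"
    and refl: "\<And>x. x \<in> G \<Longrightarrow> R x x"
    and sym: "\<And>x y. x \<in> G \<Longrightarrow> y \<in> G \<Longrightarrow> R x y \<Longrightarrow> R y x"
    and trans: "\<And>x y z. x \<in> G \<Longrightarrow> y \<in> G \<Longrightarrow> z \<in> G \<Longrightarrow> R x y \<Longrightarrow> R y z \<Longrightarrow> R x z"
    and unsplit: "\<And>U. U \<subseteq> G \<Longrightarrow> (\<forall>x\<in>U. \<forall>y\<in>G. R x y \<longrightarrow> y \<in> U) \<Longrightarrow> sum D U < \<mu> \<or> sum D (G - U) < \<mu>"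
  shows "\<exists>a\<in>G. sum D G - 2 * \<mu> < sum D {b\<in>G. R a b}"
proof -
  define closed where "closed U \<longleftrightarrow> U \<subseteq> G \<and> (\<forall>x\<in>U. \<forall>y\<in>G. R x y \<longrightarrow> y \<in> U)" for U
  define light where "light = {U. closed U \<and> sum D U < \<mu>}"
  have "finite light"
    using \<open>finite G\<close> by (rule finite_subset[rotated, OF finite_Pow_iff[THEN iffD2]]) (auto simp: light_def closed_def)
  moreover have "{} \<in> light"
    using \<open>0 < \<mu>\<close> by (simp add: light_def closed_def)
  ultimately obtain U where U: "U \<in> light" and U_max: "\<forall>W\<in>light. U \<subseteq> W \<longrightarrow> U = W"
    using finite_has_maximal by blast
  have "U \<noteq> G" using U \<open>\<mu> \<le> sum D G\<close> by (auto simp: light_def)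
  then obtain a where a: "a \<in> G" "a \<notin> U" using U by (auto simp: light_def closed_def)
  define K where "K = {b\<in>G. R a b}"
  have "U \<inter> K = {}"
    using U a sym unfolding light_def closed_def K_def by blast
  have "closed (U \<union> K)"
    using U a(1) trans unfolding light_def closed_def K_def by blast
  moreover have "U \<union> K \<noteq> U"
    using a refl by (auto simp: K_def)
  ultimately have "\<mu> \<le> sum D (U \<union> K)"
    using U_max by (auto simp: light_def)
  moreover have "sum D (U \<union> K) < \<mu> \<or> sum D (G - (U \<union> K)) < \<mu>"
    using unsplit \<open>closed (U \<union> K)\<close> unfolding closed_def by blast
  ultimately have "sum D (G - (U \<union> K)) < \<mu>"
    by linarith
  moreover have "sum D G = sum D U + sum D K + sum D (G - (U \<union> K))"
  proof -
    have "U \<union> K \<subseteq> G" using \<open>closed (U \<union> K)\<close> by (simp add: closed_def)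
    then have "finite U" "finite K" using \<open>finite G\<close> by (auto intro: finite_subset)
    then show ?thesis
      using \<open>U \<inter> K = {}\<close> \<open>U \<union> K \<subseteq> G\<close> \<open>finite G\<close>
      by (simp add: sum.union_disjoint sum.subset_diff[of "U \<union> K" G])
  qed
  ultimately have "sum D G - 2 * \<mu> < sum D K"
    using U by (simp add: light_def)
  then show ?thesis
    using a(1) unfolding K_def by blast
qed

lemma css_d_le:
  assumes "y \<in> kerH n H1 - perp n (kerH n H2)"
  shows "css_d n H1 H2 \<le> hw n y"
proof -
  have "(kerH n H2 - perp n (kerH n H1)) \<union> (kerH n H1 - perp n (kerH n H2)) \<subseteq> F2vec n"
    using kerH_subset[of n H1] kerH_subset[of n H2] by blast
  then have "finite ((kerH n H2 - perp n (kerH n H1)) \<union> (kerH n H1 - perp n (kerH n H2)))"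
    by (rule finite_subset) simp
  then show ?thesis
    unfolding css_d_def by (intro Min_le finite_imageI) (use assms in blast)+
qed

text \<open>One side of a clustered CSS code at scale \<open>e\<close>: \<open>H\<^sub>1\<close> plays the role of \<open>H\<^sub>X\<close> and
  \<open>C = (ker H\<^sub>2)\<^sup>\<perp>\<close> the stabilizers of the same type; the assumptions on \<open>e\<close> make clustering at \<open>2e\<close>
  separate clusters by more than their diameter and prevent a logical operator inside one cluster.\<close>
locale clustered_code =
  fixes n :: nat and H1 H2 :: "(nat \<Rightarrow> bool) list" and c1 c2 \<epsilon>0 e :: real
  assumes rows2: "set H2 \<subseteq> F2vec n"
    and css: "perp n (kerH n H2) \<subseteq> kerH n H1"
    and clustering: "clustering n H1 H2 c1 c2 \<epsilon>0"
    and e_pos: "0 < e" and e_lt: "2 * e < \<epsilon>0"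
    and c1_pos: "0 < c1" and n_pos: "0 < n"
    and e_sep: "4 * c1 * e < c2"
    and e_dist: "2 * c1 * e * real n < real (css_d n H1 H2)"
begin

abbreviation C where "C \<equiv> perp n (kerH n H2)"

abbreviation G where "G \<equiv> G_eps n H1 e"

definition close :: "(nat \<Rightarrow> bool) \<Rightarrow> (nat \<Rightarrow> bool) \<Rightarrow> bool" where
  "close a b \<longleftrightarrow> real (coset_wt n C (vadd a b)) \<le> c1 * (2 * e) * real n"

definition cluster :: "(nat \<Rightarrow> bool) \<Rightarrow> (nat \<Rightarrow> bool) set" where
  "cluster a = {b\<in>G. close a b}"

lemma close_or_far:
  "y \<in> G_eps n H1 (2 * e) \<Longrightarrow>
     real (coset_wt n C y) \<le> c1 * (2 * e) * real n \<or> c2 * real n \<le> real (coset_wt n C y)"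
  using clustering[unfolded clustering_def, rule_format, of "2 * e"] e_pos e_lt by simp

lemma close_refl: "close a a"
  using e_pos c1_pos by (simp add: close_def coset_wt_eq_0)

lemma close_sym: "close a b \<Longrightarrow> close b a"
  by (simp add: close_def vadd_commute)

lemma close_trans:
  assumes "a \<in> G" "c \<in> G" "close a b" "close b c"
  shows "close a c"
proof -
  have "vadd a c = vadd (vadd a b) (vadd b c)"
    by (auto simp: vadd_def fun_eq_iff)
  then have "real (coset_wt n C (vadd a c)) \<le> real (coset_wt n C (vadd a b)) + real (coset_wt n C (vadd b c))"
    using coset_wt_vadd_le[of n "kerH n H2" "vadd a b" "vadd b c"] by simp
  also have "\<dots> \<le> c1 * (4 * e) * real n"
    using assms(3,4) unfolding close_def by linarith
  also have "\<dots> < c2 * real n"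
    using e_sep n_pos by (simp add: ac_simps)
  finally show ?thesis
    using close_or_far[OF G_eps_vadd[OF assms(1,2)]] unfolding close_def by linarith
qed

lemma far_apart:
  assumes "a \<in> G" "b \<in> G" "\<not> close a b"
  shows "c2 * real n \<le> real (hw n (vadd a b))"
  using close_or_far[OF G_eps_vadd[OF assms(1,2)]] assms(3) coset_wt_le_hw[of n "kerH n H2" "vadd a b"]
  unfolding close_def by linarith

lemma C_subset_kerH: "c \<in> C \<Longrightarrow> c \<in> kerH n H1"
  using css by blast

lemma rows2_in_C: "r \<in> set H2 \<Longrightarrow> r \<in> C"
  using rows2 unfolding perp_def kerH_def by blast

lemma vadd_row_close:
  assumes "x \<in> G" "r \<in> set H2"
  shows "vadd x r \<in> G" and "close x (vadd x r)"
  using assms e_pos c1_pos G_eps_vadd_kerH[OF assms(1) C_subset_kerH[OF rows2_in_C]]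
  by (auto simp: close_def vadd_def[symmetric] coset_wt_eq_0[OF rows2_in_C])

lemma css_d_le_coset_wt:
  assumes "v \<in> kerH n H1" "v \<notin> C"
  shows "css_d n H1 H2 \<le> coset_wt n C v"
proof -
  obtain c where c: "c \<in> C" "coset_wt n C v = hw n (vadd v c)"
    using coset_wt_attained by blast
  have "vadd v c \<in> kerH n H1"
    using kerH_vadd[OF assms(1) C_subset_kerH[OF c(1)]] .
  moreover have "vadd v c \<notin> C"
  proof
    assume "vadd v c \<in> C"
    then have "vadd (vadd v c) c \<in> C" using perp_vadd c(1) by blast
    then show False using assms(2) by simp
  qed
  ultimately show ?thesis
    using css_d_le c(2) by simp
qed

lemma close_kerH_in_C:
  assumes "close a b" "vadd a b \<in> kerH n H1"
  shows "vadd a b \<in> C"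
  using assms css_d_le_coset_wt[OF assms(2)] e_dist unfolding close_def by force

lemma vadd_logical_far:
  assumes "v \<in> kerH n H1" "v \<notin> C" "x \<in> G"
  shows "vadd x v \<in> G" and "\<not> close x (vadd x v)"
  using assms G_eps_vadd_kerH close_kerH_in_C[of x "vadd x v"] by auto

lemma finite_G: "finite G"
  using G_eps_subset by (rule finite_subset) simp

lemma cluster_subset: "cluster a \<subseteq> G"
  by (auto simp: cluster_def)

lemma close_in_cluster:
  assumes "x \<in> cluster a" "y \<in> cluster a"
  shows "close x y"
proof -
  have "x \<in> G" "y \<in> G" "close a x" "close a y"
    using assms by (simp_all add: cluster_def)
  then show ?thesis
    using close_trans[of x y a] close_sym by blast
qed

lemma cluster_vadd_kerH_in_C:
  assumes "z \<in> cluster a" "z' \<in> cluster a" "vadd z z' \<in> kerH n H1"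
  shows "vadd z z' \<in> C"
  using close_kerH_in_C[OF close_in_cluster[OF assms(1,2)] assms(3)] .

lemma exists_heavy_cluster:
  assumes total: "sum D (F2vec n) = 1" and outside: "sum D (F2vec n - G) < 0.004"
    and not_spread: "\<not> spread n D 0.02 c2"
  shows "\<exists>a\<in>G. 0.956 < sum D (cluster a)"
proof -
  have mass_G: "0.996 < sum D G"
    using sum.subset_diff[OF G_eps_subset[of n H1 e] finite_F2vec, of D] total outside by simp
  have unsplit: "sum D U < 0.02 \<or> sum D (G - U) < 0.02"
    if U: "U \<subseteq> G" "\<forall>x\<in>U. \<forall>y\<in>G. close x y \<longrightarrow> y \<in> U" for U
  proof (rule ccontr)
    assume heavy: "\<not> (sum D U < 0.02 \<or> sum D (G - U) < 0.02)"
    moreover have "(0::real) < 0.02" by simp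
    ultimately have "U \<noteq> {}" "G - U \<noteq> {}" by (metis sum.empty)+
    moreover have "c2 * real n \<le> real (hw n (vadd s t))" if "s \<in> U" "t \<in> G - U" for s t
      using that U by (intro far_apart) auto
    ultimately have "spread n D 0.02 c2"
      unfolding spread_def using heavy U(1) G_eps_subset[of n H1 e]
      by (intro exI[of _ U] exI[of _ "G - U"]) auto
    with not_spread show False ..
  qed
  have "\<exists>a\<in>G. sum D G - 2 * 0.02 < sum D {b\<in>G. close a b}"
  proof (rule exists_heavy_class[OF finite_G])
    show "0.02 \<le> sum D G" using mass_G by simp
    show "close x z" if "x \<in> G" "z \<in> G" "close x y" "close y z" for x y z
      using close_trans that by blast
  qed (use close_refl close_sym unsplit in auto)
  then show ?thesis using mass_G unfolding cluster_def by force
qed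

lemma spread_by_logical_shift:
  assumes rho: "density n \<rho>"
    and v: "v \<in> kerH n H1" "v \<notin> C"
    and a: "a \<in> G" and mass_a: "0.956 < sum (D_X n \<rho>) (cluster a)"
    and A: "A \<subseteq> F2vec n" and mass_A: "0.956 < sum (D_Z n \<rho>) A"
    and A_in: "\<And>z z'. z \<in> A \<Longrightarrow> z' \<in> A \<Longrightarrow> vadd z z' \<in> kerH n H2 \<Longrightarrow> vadd z z' \<in> perp n (kerH n H1)"
  shows "spread n (D_X n \<rho>) 0.02 c2"
proof -
  define B where "B = cluster a"
  define S where "S = (\<lambda>x. vadd x v) ` B"
  have B_sub: "B \<subseteq> F2vec n"
    using cluster_subset G_eps_subset unfolding B_def by blast
  have v_vec: "v \<in> F2vec n"
    using v(1) kerH_subset by blast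
  have B_closed: "vadd x r \<in> B" if "x \<in> B" "r \<in> set H2" for x r
    using that a vadd_row_close[of x r] close_trans[of a "vadd x r" x] unfolding B_def cluster_def by blast
  have A_orth: "\<not> dot n v (vadd z z')" if "z \<in> A" "z' \<in> A" "vadd z z' \<in> kerH n H2" for z z'
    using A_in[OF that] v(1) dot_commute unfolding perp_def by blast
  have "sum (D_Z n \<rho>) (F2vec n - A) < 0.044"
    using sum.subset_diff[OF A finite_F2vec, of "D_Z n \<rho>"] sum_D_Z[OF rho] mass_A by simp
  then have "0.02 \<le> sum (D_X n \<rho>) S"
    using sum_D_X_shift_ge[OF rho B_sub v_vec, where H = H2 and A = A] B_closed A_orth mass_a
    by (simp add: S_def B_def sum.reindex[OF inj_on_vadd])
  moreover have "0.02 \<le> sum (D_X n \<rho>) B"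
    using mass_a by (simp add: B_def)
  moreover have "c2 * real n \<le> real (hw n (vadd s t))" if "s \<in> B" "t \<in> S" for s t
  proof -
    obtain y where y: "y \<in> B" "t = vadd y v" using \<open>t \<in> S\<close> unfolding S_def by blast
    have "s \<in> G" "y \<in> G" using \<open>s \<in> B\<close> y(1) cluster_subset unfolding B_def by blast+
    then have "t \<in> G" "\<not> close y t" using vadd_logical_far[OF v] y(2) by auto
    moreover have "close y s" using close_in_cluster y(1) \<open>s \<in> B\<close> unfolding B_def by blast
    ultimately have "\<not> close s t" using close_trans \<open>y \<in> G\<close> by blast
    then show ?thesis using far_apart \<open>s \<in> G\<close> \<open>t \<in> G\<close> by blast
  qed
  moreover have "S \<subseteq> F2vec n" using B_sub v_vec unfolding S_def by auto
  ultimately show ?thesis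
    unfolding spread_def using B_sub by (intro exI[of _ B] exI[of _ S]) auto
qed

end

lemma css_condition_swap:
  assumes rows1: "set H1 \<subseteq> F2vec n" and css: "perp n (kerH n H1) \<subseteq> kerH n H2"
  shows "perp n (kerH n H2) \<subseteq> kerH n H1"
proof
  fix c assume c: "c \<in> perp n (kerH n H2)"
  have "r \<in> kerH n H2" if "r \<in> set H1" for r
    using that rows1 css unfolding perp_def kerH_def by blast
  then show "c \<in> kerH n H1"
    using c dot_commute unfolding perp_def kerH_def by blast
qed

lemma clustering_swap: "clustering n H1 H2 c1 c2 \<epsilon>0 \<longleftrightarrow> clustering n H2 H1 c1 c2 \<epsilon>0"
  unfolding clustering_def by blast

lemma css_d_swap: "css_d n H1 H2 = css_d n H2 H1"
  by (simp add: css_d_def Un_commute)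

lemma exists_logical_of_css_k_pos:
  assumes "perp n (kerH n HX) \<subseteq> kerH n HZ" and "0 < css_k n HX HZ"
  shows "\<exists>u. u \<in> kerH n HZ - perp n (kerH n HX)"
proof (rule ccontr)
  assume "\<nexists>u. u \<in> kerH n HZ - perp n (kerH n HX)"
  then have "kerH n HZ = perp n (kerH n HX)" using assms(1) by blast
  then show False using assms(2) by (simp add: css_k_def)
qed

lemma exists_dual_logical_operator:
  assumes u: "u \<in> kerH n H2 - perp n (kerH n H1)"
  shows "\<exists>v. v \<in> kerH n H1 - perp n (kerH n H2)"
proof -
  obtain v where "v \<in> kerH n H1" "dot n u v"
    using u kerH_subset unfolding perp_def by blast
  moreover have "v \<notin> perp n (kerH n H2)"
    using u \<open>dot n u v\<close> dot_commute unfolding perp_def by blast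
  ultimately show ?thesis by blast
qed

lemma css_d_pos:
  assumes "u \<in> kerH n H2 - perp n (kerH n H1)"
  shows "0 < css_d n H1 H2"
proof -
  define S where "S = (kerH n H2 - perp n (kerH n H1)) \<union> (kerH n H1 - perp n (kerH n H2))"
  have "S \<subseteq> F2vec n"
    using kerH_subset[of n H1] kerH_subset[of n H2] unfolding S_def by blast
  moreover have "S \<noteq> {}"
    using assms unfolding S_def by blast
  ultimately have "css_d n H1 H2 \<in> hw n ` S"
    unfolding css_d_def S_def[symmetric] by (intro Min_in finite_imageI) (auto intro: finite_subset)
  moreover have "vzero \<notin> S"
    unfolding S_def by simp
  ultimately show ?thesis
    using hw_pos \<open>S \<subseteq> F2vec n\<close> by fastforce
qed

lemma obtain_logical_operator:
  assumes "perp n (kerH n HX) \<subseteq> kerH n HZ" and "0 < css_k n HX HZ"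
  obtains v where "v \<in> kerH n HX" "v \<notin> perp n (kerH n HZ)" and "0 < n" and "0 < css_d n HX HZ"
proof -
  obtain u where u: "u \<in> kerH n HZ - perp n (kerH n HX)"
    using exists_logical_of_css_k_pos[OF assms] by blast
  have "u \<in> F2vec n" "u \<noteq> vzero"
    using u kerH_subset[of n HZ] vzero_perp[of n "kerH n HX"] by blast+
  then have "0 < n"
    using hw_pos hw_le[of n u] by (metis leD neq0_conv)
  moreover obtain v where "v \<in> kerH n HX - perp n (kerH n HZ)"
    using exists_dual_logical_operator[OF u] by blast
  ultimately show ?thesis
    using that css_d_pos[OF u] by blast
qed

lemma exists_admissible_scale:
  fixes c1 c2 \<epsilon>0 d \<epsilon> m :: real
  assumes "0 < c1" "0 < c2" "0 < \<epsilon>0" "0 < d" "0 < m"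
    and "\<epsilon> < 1/1000 * min (\<epsilon>0 / 2) (min (c2 / (4 * c1)) (d / (2 * c1 * m)))"
  shows "\<exists>e>0. 2 * e < \<epsilon>0 \<and> 4 * c1 * e < c2 \<and> 2 * c1 * e * m < d \<and> 500 * \<epsilon> < e"
proof -
  define M where "M = min (\<epsilon>0 / 2) (min (c2 / (4 * c1)) (d / (2 * c1 * m)))"
  have "0 < M" using assms(1-5) by (simp add: M_def)
  have "M \<le> \<epsilon>0 / 2" by (simp add: M_def)
  then have "2 * (M / 2) < \<epsilon>0" using assms(3) by simp
  moreover have "4 * c1 * (M / 2) < c2"
  proof -
    have "M \<le> c2 / (4 * c1)" by (simp add: M_def)
    then have "M * (4 * c1) \<le> c2" using assms(1) by (simp add: pos_le_divide_eq)
    moreover have "0 < M * c1" using \<open>0 < M\<close> assms(1) by simp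
    ultimately show ?thesis by (simp add: algebra_simps)
  qed
  moreover have "2 * c1 * (M / 2) * m < d"
  proof -
    have "M \<le> d / (2 * c1 * m)" by (simp add: M_def)
    then have "M * (2 * c1 * m) \<le> d" using assms(1,5) by (simp add: pos_le_divide_eq)
    moreover have "0 < M * (c1 * m)" using \<open>0 < M\<close> assms(1,5) by simp
    ultimately show ?thesis by (simp add: algebra_simps)
  qed
  moreover have "500 * \<epsilon> < M / 2" using assms(6) by (simp add: M_def)
  ultimately show ?thesis using \<open>0 < M\<close> by (intro exI[of _ "M / 2"]) simp
qed

lemma low_energy_syndromes_rare:
  assumes "set HX \<subseteq> F2vec n" and rho: "density n \<rho>" and "HX \<noteq> []" "HZ \<noteq> []"
    and energy: "Re (mtrace n (mmul n (code_ham n HX HZ) \<rho>)) \<le> \<epsilon>"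
    and "0 < e" "500 * \<epsilon> < e"
  shows "sum (D_X n \<rho>) (F2vec n - G_eps n HX e) < 0.004"
    and "sum (D_Z n \<rho>) (F2vec n - G_eps n HZ e) < 0.004"
proof -
  have "mean_synd n HX (D_X n \<rho>) + mean_synd n HZ (D_Z n \<rho>) \<le> 2 * \<epsilon>"
    using energy Re_mtrace_mmul_code_ham[OF assms(1) rho] by simp
  moreover have "0 \<le> mean_synd n HX (D_X n \<rho>)" "0 \<le> mean_synd n HZ (D_Z n \<rho>)"
    using D_X_nonneg[OF rho] D_Z_nonneg[OF rho] by (simp_all add: mean_synd_nonneg)
  moreover have "e * sum (D_X n \<rho>) (F2vec n - G_eps n HX e) \<le> mean_synd n HX (D_X n \<rho>)"
    "e * sum (D_Z n \<rho>) (F2vec n - G_eps n HZ e) \<le> mean_synd n HZ (D_Z n \<rho>)"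
    using D_X_nonneg[OF rho] D_Z_nonneg[OF rho] assms(3,4,6) by (simp_all add: mass_outside_G_eps_le)
  ultimately have "e * sum (D_X n \<rho>) (F2vec n - G_eps n HX e) < e * (1 / 250) \<and>
      e * sum (D_Z n \<rho>) (F2vec n - G_eps n HZ e) < e * (1 / 250)"
    using \<open>500 * \<epsilon> < e\<close> by (intro conjI; linarith)
  with \<open>0 < e\<close> show "sum (D_X n \<rho>) (F2vec n - G_eps n HX e) < 0.004"
    and "sum (D_Z n \<rho>) (F2vec n - G_eps n HZ e) < 0.004"
    by simp_all
qed

theorem theorem4p7:
  fixes n :: nat and HX HZ :: "(nat \<Rightarrow> bool) list"
    and c1 c2 \<epsilon>0 \<epsilon> :: real and \<rho> :: qop
  assumes rowsX: "set HX \<subseteq> F2vec n" and rowsZ: "set HZ \<subseteq> F2vec n"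
    and mX: "HX \<noteq> []" and mZ: "HZ \<noteq> []"
    and css: "perp n (kerH n HX) \<subseteq> kerH n HZ"
    and kpos: "css_k n HX HZ > 0"
    and cpos: "c1 > 0" "c2 > 0" "\<epsilon>0 > 0"
    and clus: "clustering n HX HZ c1 c2 \<epsilon>0"
    and eps: "\<epsilon> < 1/1000 * min (\<epsilon>0 / 2) (min (c2 / (4 * c1)) (real (css_d n HX HZ) / (2 * c1 * real n)))"
    and rho: "density n \<rho>"
    and energy: "Re (mtrace n (mmul n (code_ham n HX HZ) \<rho>)) \<le> \<epsilon>"
  shows "spread n (D_X n \<rho>) 0.02 c2 \<or> spread n (D_Z n \<rho>) 0.02 c2"
proof (rule ccontr)
  assume "\<not> ?thesis"
  then have not_X: "\<not> spread n (D_X n \<rho>) 0.02 c2" and not_Z: "\<not> spread n (D_Z n \<rho>) 0.02 c2"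
    by auto
  obtain v where v: "v \<in> kerH n HX" "v \<notin> perp n (kerH n HZ)"
    and "0 < n" and "0 < css_d n HX HZ"
    using obtain_logical_operator[OF css kpos] by blast
  obtain e where e: "0 < e" "2 * e < \<epsilon>0" "4 * c1 * e < c2"
      "2 * c1 * e * real n < real (css_d n HX HZ)" "500 * \<epsilon> < e"
    using exists_admissible_scale[OF cpos _ _ eps] \<open>0 < n\<close> \<open>0 < css_d n HX HZ\<close> by auto
  interpret X: clustered_code n HX HZ c1 c2 \<epsilon>0 e
    using rowsZ css_condition_swap[OF rowsX css] clus e cpos \<open>0 < n\<close> by unfold_locales auto
  interpret Z: clustered_code n HZ HX c1 c2 \<epsilon>0 e
    using rowsX css clus e cpos \<open>0 < n\<close> by unfold_locales (auto simp: clustering_swap css_d_swap)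
  obtain aX where aX: "aX \<in> G_eps n HX e" "0.956 < sum (D_X n \<rho>) (X.cluster aX)"
    using X.exists_heavy_cluster[OF sum_D_X[OF rho] _ not_X]
      low_energy_syndromes_rare[OF rowsX rho mX mZ energy e(1,5)] by blast
  obtain aZ where aZ: "0.956 < sum (D_Z n \<rho>) (Z.cluster aZ)"
    using Z.exists_heavy_cluster[OF sum_D_Z[OF rho] _ not_Z]
      low_energy_syndromes_rare[OF rowsX rho mX mZ energy e(1,5)] by blast
  have "Z.cluster aZ \<subseteq> F2vec n"
    using Z.cluster_subset G_eps_subset by (rule subset_trans)
  then have "spread n (D_X n \<rho>) 0.02 c2"
    by (rule X.spread_by_logical_shift[OF rho v aX _ aZ Z.cluster_vadd_kerH_in_C])
  with not_X show False ..
qed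

end
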